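(* Let $S$ be a $\Gamma$-semiring with zero having a left unity and a right unity, and let $L$ be its left operator semiring. Let $\sigma,\sigma_1,\sigma_2\in FI(S)$ and $\mu,\mu_1,\mu_2\in FI(L)$. Then: (i) $\sigma^{+'}\in FI(L)$; moreover, if $\sigma$ is non-constant then $\sigma^{+'}$ is non-constant; (ii) $(\sigma^{+'})^{+}=\sigma$; (iii) $\sigma_1\neq\sigma_2$ implies $\sigma_1^{+'}\neq\sigma_2^{+'}$; (iv) $(\sigma_1\oplus\sigma_2)^{+'}=\sigma_1^{+'}\oplus\sigma_2^{+'}$; (v) $(\sigma_1\cap\sigma_2)^{+'}=\sigma_1^{+'}\cap\sigma_2^{+'}$; (vi) $\sigma_1\subseteq\sigma_2$ implies $\sigma_1^{+'}\subseteq\sigma_2^{+'}$; (vii) $\mu^{+}\in FI(S)$; moreover, if $\mu$ is non-constant then $\mu^{+}$ is non-constant; (viii) $(\mu^{+})^{+'}=\mu$; (ix) $\mu_1\subseteq\mu_2$ implies $\mu_1^{+}\subseteq\mu_2^{+}$.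
   Context: A $\Gamma$-semiring: $S$ and $\Gamma$ are additive commutative semigroups with a map $S\times\Gamma\times S\to S$, $(a,\alpha,b)\mapsto a\alpha b$, such that $(a+b)\alpha c=a\alpha c+b\alpha c$, $a\alpha(b+c)=a\alpha b+a\alpha c$, $a(\alpha+\beta)b=a\alpha b+a\beta b$, $a\alpha(b\beta c)=(a\alpha b)\beta c$. With zero: $(S,+)$, $(\Gamma,+)$ are monoids, $0_S\alpha x=0_S=x\alpha0_S$, $x0_\Gamma y=0_S$. Left operator semiring $L$: $F$ is the free additive commutative semigroup on $S\times\Gamma$; $\sum_i(x_i,\alpha_i)\,\rho\,\sum_j(y_j,\beta_j)$ iff $\sum_ix_i\alpha_ia=\sum_jy_j\beta_ja$ for all $a\in S$; $L=F/\rho$, classes written $\sum_i[x_i,\alpha_i]$, with multiplication $(\sum_i[x_i,\alpha_i])(\sum_j[y_j,\beta_j])=\sum_{i,j}[x_i\alpha_iy_j,\beta_j]$; its zero is $[0,\gamma]$ (any $\gamma\in\Gamma$). A left unity of $S$ is $\sum_i[e_i,\delta_i]\in L$ with $\sum_ie_i\delta_ia=a$ for all $a\in S$; a right unity is a finite family $\gamma_j\in\Gamma,f_j\in S$ with $\sum_ja\gamma_jf_j=a$ for all $a\in S$. A fuzzy subset is a map into $[0,1]$. A fuzzy ideal of $S$ is a fuzzy subset $\mu$, not identically $0$, with $\mu(x+y)\ge\min[\mu(x),\mu(y)]$, $\mu(x\gamma y)\ge\mu(y)$ and $\mu(x\gamma y)\ge\mu(x)$ for all $x,y\in S,\gamma\in\Gamma$.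 A fuzzy ideal of the semiring $L$ is a fuzzy subset $\mu$, not identically $0$, with $\mu(p+q)\ge\min[\mu(p),\mu(q)]$, $\mu(pq)\ge\mu(q)$, $\mu(pq)\ge\mu(p)$. Convention: every fuzzy ideal of $S$ or of $L$ is assumed to satisfy $\mu(0)=1$. $FI(S)$, $FI(L)$ denote the sets of fuzzy ideals. For a fuzzy subset $\mu$ of $L$: $\mu^{+}(x)=\inf_{\gamma\in\Gamma}\mu([x,\gamma])$ ($x\in S$). For a fuzzy subset $\sigma$ of $S$: $\sigma^{+'}(\sum_i[x_i,\alpha_i])=\inf_{s\in S}\sigma(\sum_ix_i\alpha_is)$. For fuzzy ideals $\mu_1,\mu_2$ (of $S$, resp. of $L$): $(\mu_1\oplus\mu_2)(x)=\sup\{\min[\mu_1(u),\mu_2(v)]:x=u+v\}$; $\cap$ is the pointwise minimum and $\subseteq$ is pointwise $\le$. *)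

theory Defs
  imports Complex_Main "HOL-Library.Multiset"
begin

text \<open>A Gamma-semiring with zero: the carriers S and Gamma are the types 's and 'g,
  both commutative monoids under +, with ternary operation tri a \<alpha> b = a \<alpha> b.\<close>

definition gamma_semiring_zero :: "('s::comm_monoid_add \<Rightarrow> 'g::comm_monoid_add \<Rightarrow> 's \<Rightarrow> 's) \<Rightarrow> bool" where
  "gamma_semiring_zero tri \<longleftrightarrow>
     (\<forall>a b c \<alpha>. tri (a + b) \<alpha> c = tri a \<alpha> c + tri b \<alpha> c) \<and>
     (\<forall>a b c \<alpha>. tri a \<alpha> (b + c) = tri a \<alpha> b + tri a \<alpha> c) \<and>
     (\<forall>a b \<alpha> \<beta>. tri a (\<alpha> + \<beta>) b = tri a \<alpha> b + tri a \<beta> b) \<and>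
     (\<forall>a b c \<alpha> \<beta>. tri a \<alpha> (tri b \<beta> c) = tri (tri a \<alpha> b) \<beta> c) \<and>
     (\<forall>x \<alpha>. tri 0 \<alpha> x = 0 \<and> tri x \<alpha> 0 = 0) \<and>
     (\<forall>x y. tri x 0 y = 0)"

text \<open>Elements of the free additive commutative semigroup F on S \<times> Gamma are the
  nonempty finite multisets of pairs; T evaluated at a is \<Sum> x_i \<alpha>_i a.\<close>

definition gev :: "('s::comm_monoid_add \<Rightarrow> 'g \<Rightarrow> 's \<Rightarrow> 's) \<Rightarrow> ('s \<times> 'g) multiset \<Rightarrow> 's \<Rightarrow> 's" where
  "gev tri T a = sum_mset (image_mset (\<lambda>(x, \<alpha>). tri x \<alpha> a) T)"

definition Fset :: "('s \<times> 'g) multiset set" where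
  "Fset = {T. T \<noteq> {#}}"

definition rho :: "('s::comm_monoid_add \<Rightarrow> 'g \<Rightarrow> 's \<Rightarrow> 's) \<Rightarrow> (('s \<times> 'g) multiset \<times> ('s \<times> 'g) multiset) set" where
  "rho tri = {(T, U). T \<in> Fset \<and> U \<in> Fset \<and> (\<forall>a. gev tri T a = gev tri U a)}"

type_synonym ('s, 'g) lop = "('s \<times> 'g) multiset set"

definition Lset :: "('s::comm_monoid_add \<Rightarrow> 'g \<Rightarrow> 's \<Rightarrow> 's) \<Rightarrow> ('s, 'g) lop set" where
  "Lset tri = Fset // rho tri"

definition cls :: "('s::comm_monoid_add \<Rightarrow> 'g \<Rightarrow> 's \<Rightarrow> 's) \<Rightarrow> ('s \<times> 'g) multiset \<Rightarrow> ('s, 'g) lop" where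
  "cls tri T = rho tri `` {T}"

definition rep :: "('s, 'g) lop \<Rightarrow> ('s \<times> 'g) multiset" where
  "rep P = (SOME T. T \<in> P)"

definition L_add :: "('s::comm_monoid_add \<Rightarrow> 'g \<Rightarrow> 's \<Rightarrow> 's) \<Rightarrow> ('s, 'g) lop \<Rightarrow> ('s, 'g) lop \<Rightarrow> ('s, 'g) lop" where
  "L_add tri P Q = cls tri (rep P + rep Q)"

definition F_mult :: "('s::comm_monoid_add \<Rightarrow> 'g \<Rightarrow> 's \<Rightarrow> 's) \<Rightarrow> ('s \<times> 'g) multiset \<Rightarrow> ('s \<times> 'g) multiset \<Rightarrow> ('s \<times> 'g) multiset" where
  "F_mult tri T U = sum_mset (image_mset (\<lambda>(x, \<alpha>). image_mset (\<lambda>(y, \<beta>). (tri x \<alpha> y, \<beta>)) U) T)"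

definition L_mult :: "('s::comm_monoid_add \<Rightarrow> 'g \<Rightarrow> 's \<Rightarrow> 's) \<Rightarrow> ('s, 'g) lop \<Rightarrow> ('s, 'g) lop \<Rightarrow> ('s, 'g) lop" where
  "L_mult tri P Q = cls tri (F_mult tri (rep P) (rep Q))"

text \<open>Zero of L: [0,\<gamma>] (any \<gamma>; we take \<gamma> = 0).\<close>

definition L_zero :: "('s::comm_monoid_add \<Rightarrow> 'g::zero \<Rightarrow> 's \<Rightarrow> 's) \<Rightarrow> ('s, 'g) lop" where
  "L_zero tri = cls tri {#(0, 0)#}"

definition has_left_unity :: "('s::comm_monoid_add \<Rightarrow> 'g \<Rightarrow> 's \<Rightarrow> 's) \<Rightarrow> bool" where
  "has_left_unity tri \<longleftrightarrow> (\<exists>P \<in> Lset tri. \<forall>a. gev tri (rep P) a = a)"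

definition has_right_unity :: "('s::comm_monoid_add \<Rightarrow> 'g \<Rightarrow> 's \<Rightarrow> 's) \<Rightarrow> bool" where
  "has_right_unity tri \<longleftrightarrow>
     (\<exists>R :: ('g \<times> 's) multiset. \<forall>a. sum_mset (image_mset (\<lambda>(\<gamma>, f). tri a \<gamma> f) R) = a)"

definition fuzzy_ideal_S :: "('s::comm_monoid_add \<Rightarrow> 'g \<Rightarrow> 's \<Rightarrow> 's) \<Rightarrow> ('s \<Rightarrow> real) \<Rightarrow> bool" where
  "fuzzy_ideal_S tri \<sigma> \<longleftrightarrow>
     (\<forall>x. 0 \<le> \<sigma> x \<and> \<sigma> x \<le> 1) \<and> (\<exists>x. \<sigma> x \<noteq> 0) \<and>
     (\<forall>x y. \<sigma> (x + y) \<ge> min (\<sigma> x) (\<sigma> y)) \<and>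
     (\<forall>x y \<gamma>. \<sigma> (tri x \<gamma> y) \<ge> \<sigma> y \<and> \<sigma> (tri x \<gamma> y) \<ge> \<sigma> x) \<and>
     \<sigma> 0 = 1"

definition fuzzy_ideal_L :: "('s::comm_monoid_add \<Rightarrow> 'g::comm_monoid_add \<Rightarrow> 's \<Rightarrow> 's) \<Rightarrow> (('s, 'g) lop \<Rightarrow> real) \<Rightarrow> bool" where
  "fuzzy_ideal_L tri \<mu> \<longleftrightarrow>
     (\<forall>P \<in> Lset tri. 0 \<le> \<mu> P \<and> \<mu> P \<le> 1) \<and> (\<exists>P \<in> Lset tri. \<mu> P \<noteq> 0) \<and>
     (\<forall>P \<in> Lset tri. \<forall>Q \<in> Lset tri. \<mu> (L_add tri P Q) \<ge> min (\<mu> P) (\<mu> Q)) \<and>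
     (\<forall>P \<in> Lset tri. \<forall>Q \<in> Lset tri. \<mu> (L_mult tri P Q) \<ge> \<mu> Q \<and> \<mu> (L_mult tri P Q) \<ge> \<mu> P) \<and>
     \<mu> (L_zero tri) = 1"

definition plusL :: "('s::comm_monoid_add \<Rightarrow> 'g \<Rightarrow> 's \<Rightarrow> 's) \<Rightarrow> (('s, 'g) lop \<Rightarrow> real) \<Rightarrow> 's \<Rightarrow> real" where
  "plusL tri \<mu> x = (INF \<gamma>. \<mu> (cls tri {#(x, \<gamma>)#}))"

definition plusS :: "('s::comm_monoid_add \<Rightarrow> 'g \<Rightarrow> 's \<Rightarrow> 's) \<Rightarrow> ('s \<Rightarrow> real) \<Rightarrow> ('s, 'g) lop \<Rightarrow> real" where
  "plusS tri \<sigma> P = (INF s. \<sigma> (gev tri (rep P) s))"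

definition oplusS :: "('s::comm_monoid_add \<Rightarrow> real) \<Rightarrow> ('s \<Rightarrow> real) \<Rightarrow> 's \<Rightarrow> real" where
  "oplusS \<sigma>1 \<sigma>2 x = (SUP (u, v) \<in> {(u, v). x = u + v}. min (\<sigma>1 u) (\<sigma>2 v))"

definition oplusL :: "('s::comm_monoid_add \<Rightarrow> 'g \<Rightarrow> 's \<Rightarrow> 's) \<Rightarrow> (('s, 'g) lop \<Rightarrow> real) \<Rightarrow> (('s, 'g) lop \<Rightarrow> real) \<Rightarrow> ('s, 'g) lop \<Rightarrow> real" where
  "oplusL tri \<mu>1 \<mu>2 P =
     (SUP (U, V) \<in> {(U, V). U \<in> Lset tri \<and> V \<in> Lset tri \<and> P = L_add tri U V}. min (\<mu>1 U) (\<mu>2 V))"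

end

theory Submission
  imports Defs
begin

text \<open>
  An element \<open>P\<close> of \<open>L\<close> is determined by its action \<open>s \<mapsto> P s\<close> on \<open>S\<close>, and
  \<open>\<sigma>\<^sup>+\<^sup>'(P) = inf\<^sub>s \<sigma>(P s)\<close>, \<open>\<mu>\<^sup>+(x) = inf\<^sub>\<gamma> \<mu>[x,\<gamma>]\<close> transport the ideal axioms along this
  action and along the singletons \<open>[x,\<gamma>]\<close>. The two unities make the transports mutually inverse.
  A right unity writes \<open>x = \<Sum>\<^sub>j x \<gamma>\<^sub>j f\<^sub>j\<close>, so \<open>\<sigma>(x) \<ge> \<sigma>(x \<gamma>\<^sub>j f\<^sub>j) \<ge> \<sigma>\<^sup>+\<^sup>'[x,\<gamma>\<^sub>j]\<close> for some \<open>j\<close>, whence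
  \<open>(\<sigma>\<^sup>+\<^sup>')\<^sup>+ = \<sigma>\<close>. A left unity \<open>\<Sum>\<^sub>i [e\<^sub>i,\<delta>\<^sub>i]\<close> expands every \<open>P\<close> as \<open>\<Sum>\<^sub>i [P e\<^sub>i, \<delta>\<^sub>i]\<close>, a sum of
  singletons each of \<open>\<mu>\<close>-value at least \<open>\<mu>\<^sup>+(P e\<^sub>i) \<ge> (\<mu>\<^sup>+)\<^sup>+\<^sup>'(P)\<close>, whence \<open>(\<mu>\<^sup>+)\<^sup>+\<^sup>' = \<mu>\<close>.
  The same expansion, with each coefficient split as \<open>P e\<^sub>i = u\<^sub>i + v\<^sub>i\<close>, gives the sum formula;
  injectivity and non-constancy follow from the two inversion formulas.
\<close>

lemma oplusS_upper:
  assumes "\<And>u. \<sigma>1 u \<le> (1::real)" and "x = u + v"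
  shows "min (\<sigma>1 u) (\<sigma>2 v) \<le> oplusS \<sigma>1 \<sigma>2 x"
  unfolding oplusS_def
proof (rule cSUP_upper2[where x = "(u, v)"])
  show "bdd_above ((\<lambda>(u, v). min (\<sigma>1 u) (\<sigma>2 v)) ` {(u, v). x = u + v})"
    by (rule bdd_aboveI2[where M = 1]) (auto simp: assms(1) min.coboundedI1)
qed (use assms(2) in auto)

lemma oplusS_nonneg:
  assumes "\<And>u. 0 \<le> \<sigma>1 u" "\<And>u. \<sigma>1 u \<le> (1::real)" "\<And>v. 0 \<le> \<sigma>2 v"
  shows "0 \<le> oplusS \<sigma>1 \<sigma>2 x"
proof -
  have "min (\<sigma>1 x) (\<sigma>2 0) \<le> oplusS \<sigma>1 \<sigma>2 x"
    by (rule oplusS_upper[OF assms(2)]) simp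
  then show ?thesis using assms(1,3) by (meson min.boundedI order_trans)
qed

lemma oplusS_less_witness:
  assumes "\<And>u. \<sigma>1 u \<le> (1::real)" and "c < oplusS \<sigma>1 \<sigma>2 x"
  obtains u v where "x = u + v" and "c < \<sigma>1 u" and "c < \<sigma>2 v"
proof -
  have "bdd_above ((\<lambda>(u, v). min (\<sigma>1 u) (\<sigma>2 v)) ` {(u, v). x = u + v})"
    by (rule bdd_aboveI2[where M = 1]) (auto simp: assms(1) min.coboundedI1)
  moreover have "{(u, v). x = u + v} \<noteq> {}" by (auto intro: exI[of _ x] exI[of _ 0])
  ultimately show thesis
    using assms(2) that unfolding oplusS_def by (subst (asm) less_cSUP_iff) auto
qed

locale gamma_semiring =
  fixes tri :: "'s::comm_monoid_add \<Rightarrow> 'g::comm_monoid_add \<Rightarrow> 's \<Rightarrow> 's"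
  assumes gamma_semiring_zero: "gamma_semiring_zero tri"
begin

lemma tri_add_left: "tri (a + b) \<alpha> c = tri a \<alpha> c + tri b \<alpha> c"
  and tri_add_right: "tri a \<alpha> (b + c) = tri a \<alpha> b + tri a \<alpha> c"
  and tri_assoc: "tri a \<alpha> (tri b \<beta> c) = tri (tri a \<alpha> b) \<beta> c"
  and tri_zero_left [simp]: "tri 0 \<alpha> x = 0"
  and tri_zero_right [simp]: "tri x \<alpha> 0 = 0"
  using gamma_semiring_zero unfolding gamma_semiring_zero_def by auto

lemma gev_empty [simp]: "gev tri {#} a = 0"
  and gev_add_mset [simp]: "gev tri (add_mset (x, \<gamma>) M) a = tri x \<gamma> a + gev tri M a"
  and gev_union [simp]: "gev tri (M + N) a = gev tri M a + gev tri N a"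
  by (simp_all add: gev_def)

lemma gev_add_right: "gev tri T (a + b) = gev tri T a + gev tri T b"
  by (induction T) (auto simp: tri_add_right ac_simps)

lemma gev_zero_right [simp]: "gev tri T 0 = 0"
  by (induction T) auto

lemma tri_gev_left: "tri (gev tri T s) \<gamma> a = gev tri T (tri s \<gamma> a)"
  by (induction T) (auto simp: tri_add_left tri_assoc)

lemma tri_gev_right:
  "tri x \<alpha> (gev tri U a) = gev tri (image_mset (\<lambda>(y, \<beta>). (tri x \<alpha> y, \<beta>)) U) a"
  by (induction U) (auto simp: tri_add_right tri_assoc)

lemma gev_F_mult: "gev tri (F_mult tri T U) a = gev tri T (gev tri U a)"
  by (induction T) (auto simp: F_mult_def tri_gev_right)

lemma F_mult_nonempty: "T \<noteq> {#} \<Longrightarrow> U \<noteq> {#} \<Longrightarrow> F_mult tri T U \<noteq> {#}"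
  by (cases T) (auto simp: F_mult_def)

lemma gev_image_gev:
  "gev tri (image_mset (\<lambda>(e, \<delta>). (gev tri T e, \<delta>)) M) a = gev tri T (gev tri M a)"
  by (induction M) (auto simp: tri_gev_left gev_add_right)

lemma gev_image_add:
  "gev tri (image_mset (\<lambda>(e, \<delta>). (u e + v e, \<delta>)) M) a
     = gev tri (image_mset (\<lambda>(e, \<delta>). (u e, \<delta>)) M) a + gev tri (image_mset (\<lambda>(e, \<delta>). (v e, \<delta>)) M) a"
  by (induction M) (auto simp: tri_add_left ac_simps)

section \<open>The left operator semiring\<close>

lemma cls_eq: "M \<noteq> {#} \<Longrightarrow> cls tri M = {N. N \<noteq> {#} \<and> gev tri N = gev tri M}"
  by (auto simp: cls_def rho_def Fset_def fun_eq_iff)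

lemma cls_in_Lset: "M \<noteq> {#} \<Longrightarrow> cls tri M \<in> Lset tri"
  unfolding Lset_def cls_def by (rule quotientI) (simp add: Fset_def)

lemma rep_cls:
  assumes "M \<noteq> {#}"
  shows "rep (cls tri M) \<noteq> {#}" and "gev tri (rep (cls tri M)) = gev tri M"
proof -
  have "M \<in> cls tri M" using assms by (simp add: cls_eq)
  then have "rep (cls tri M) \<in> cls tri M" unfolding rep_def by (rule someI)
  with assms show "rep (cls tri M) \<noteq> {#}" "gev tri (rep (cls tri M)) = gev tri M"
    by (simp_all add: cls_eq)
qed

lemma cls_eqI: "M \<noteq> {#} \<Longrightarrow> N \<noteq> {#} \<Longrightarrow> (\<And>a. gev tri M a = gev tri N a) \<Longrightarrow> cls tri M = cls tri N"
  by (simp add: cls_eq fun_eq_iff)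

lemma Lset_rep:
  assumes "P \<in> Lset tri"
  shows "rep P \<noteq> {#}" and "cls tri (rep P) = P"
proof -
  obtain M where M: "M \<noteq> {#}" "P = cls tri M"
    using assms unfolding Lset_def cls_def Fset_def by (auto elim: quotientE)
  then show "rep P \<noteq> {#}" "cls tri (rep P) = P"
    using rep_cls[OF M(1)] cls_eqI by metis+
qed

lemma Lset_eqI:
  "P \<in> Lset tri \<Longrightarrow> Q \<in> Lset tri \<Longrightarrow> (\<And>a. gev tri (rep P) a = gev tri (rep Q) a) \<Longrightarrow> P = Q"
  by (metis Lset_rep cls_eqI)

lemma L_add_in_Lset: "P \<in> Lset tri \<Longrightarrow> Q \<in> Lset tri \<Longrightarrow> L_add tri P Q \<in> Lset tri"
  and gev_L_add: "P \<in> Lset tri \<Longrightarrow> Q \<in> Lset tri \<Longrightarrow>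
    gev tri (rep (L_add tri P Q)) a = gev tri (rep P) a + gev tri (rep Q) a"
  using Lset_rep[of P] Lset_rep[of Q] rep_cls[of "rep P + rep Q"] cls_in_Lset[of "rep P + rep Q"]
  by (auto simp: L_add_def)

lemma L_mult_in_Lset: "P \<in> Lset tri \<Longrightarrow> Q \<in> Lset tri \<Longrightarrow> L_mult tri P Q \<in> Lset tri"
  and gev_L_mult: "P \<in> Lset tri \<Longrightarrow> Q \<in> Lset tri \<Longrightarrow>
    gev tri (rep (L_mult tri P Q)) a = gev tri (rep P) (gev tri (rep Q) a)"
  using Lset_rep[of P] Lset_rep[of Q] F_mult_nonempty[of "rep P" "rep Q"]
    rep_cls[of "F_mult tri (rep P) (rep Q)"] cls_in_Lset[of "F_mult tri (rep P) (rep Q)"]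
  by (auto simp: L_mult_def gev_F_mult)

lemma L_add_cls: "M \<noteq> {#} \<Longrightarrow> N \<noteq> {#} \<Longrightarrow> L_add tri (cls tri M) (cls tri N) = cls tri (M + N)"
  by (rule Lset_eqI) (simp_all add: cls_in_Lset L_add_in_Lset gev_L_add rep_cls)

lemma singleton_in_Lset: "cls tri {#(x, \<gamma>)#} \<in> Lset tri"
  by (simp add: cls_in_Lset)

lemma gev_singleton: "gev tri (rep (cls tri {#(x, \<gamma>)#})) a = tri x \<gamma> a"
  by (simp add: rep_cls)

lemma L_zero_in_Lset: "L_zero tri \<in> Lset tri"
  by (simp add: L_zero_def singleton_in_Lset)

lemma gev_L_zero: "gev tri (rep (L_zero tri)) a = 0"
  by (simp add: L_zero_def gev_singleton)

lemma L_zero_eq_singleton: "cls tri {#(0, \<gamma>)#} = L_zero tri"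
  unfolding L_zero_def by (rule cls_eqI) auto

lemma L_add_zero_right: "P \<in> Lset tri \<Longrightarrow> L_add tri P (L_zero tri) = P"
  by (rule Lset_eqI) (simp_all add: L_add_in_Lset L_zero_in_Lset gev_L_add gev_L_zero)

lemma singleton_mult:
  "cls tri {#(tri x \<gamma> y, \<beta>)#} = L_mult tri (cls tri {#(x, \<gamma>)#}) (cls tri {#(y, \<beta>)#})"
  by (rule Lset_eqI) (simp_all add: singleton_in_Lset L_mult_in_Lset gev_L_mult gev_singleton tri_assoc)

lemma singleton_add:
  "cls tri {#(x + y, \<gamma>)#} = L_add tri (cls tri {#(x, \<gamma>)#}) (cls tri {#(y, \<gamma>)#})"
  by (rule Lset_eqI) (simp_all add: singleton_in_Lset L_add_in_Lset gev_L_add gev_singleton tri_add_left)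

lemma left_unity_expansion:
  assumes "has_left_unity tri" and "P \<in> Lset tri"
  obtains E where "E \<noteq> {#}" and "P = cls tri (image_mset (\<lambda>(e, \<delta>). (gev tri (rep P) e, \<delta>)) E)"
proof -
  obtain U where U: "U \<in> Lset tri" "\<And>a. gev tri (rep U) a = a"
    using assms(1) unfolding has_left_unity_def by blast
  let ?M = "image_mset (\<lambda>(e, \<delta>). (gev tri (rep P) e, \<delta>)) (rep U)"
  have "rep U \<noteq> {#}" using Lset_rep(1)[OF U(1)] .
  moreover have "P = cls tri ?M"
    by (rule Lset_eqI) (use assms(2) \<open>rep U \<noteq> {#}\<close> in \<open>simp_all add: cls_in_Lset rep_cls gev_image_gev U(2)\<close>)
  ultimately show thesis by (rule that)
qed

section \<open>Fuzzy ideals and the transports \<open>plusS\<close>, \<open>plusL\<close>\<close>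

lemma
  assumes "fuzzy_ideal_S tri \<sigma>"
  shows fuzzy_ideal_S_nonneg: "0 \<le> \<sigma> x"
    and fuzzy_ideal_S_le_one: "\<sigma> x \<le> 1"
    and fuzzy_ideal_S_add: "min (\<sigma> x) (\<sigma> y) \<le> \<sigma> (x + y)"
    and fuzzy_ideal_S_tri_right: "\<sigma> y \<le> \<sigma> (tri x \<gamma> y)"
    and fuzzy_ideal_S_tri_left: "\<sigma> x \<le> \<sigma> (tri x \<gamma> y)"
    and fuzzy_ideal_S_zero: "\<sigma> 0 = 1"
  using assms unfolding fuzzy_ideal_S_def by auto

lemma
  assumes "fuzzy_ideal_L tri \<mu>" and "P \<in> Lset tri"
  shows fuzzy_ideal_L_nonneg: "0 \<le> \<mu> P"
    and fuzzy_ideal_L_le_one: "\<mu> P \<le> 1"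
  using assms unfolding fuzzy_ideal_L_def by auto

lemma
  assumes "fuzzy_ideal_L tri \<mu>" and "P \<in> Lset tri" and "Q \<in> Lset tri"
  shows fuzzy_ideal_L_add: "min (\<mu> P) (\<mu> Q) \<le> \<mu> (L_add tri P Q)"
    and fuzzy_ideal_L_mult_right: "\<mu> Q \<le> \<mu> (L_mult tri P Q)"
    and fuzzy_ideal_L_mult_left: "\<mu> P \<le> \<mu> (L_mult tri P Q)"
  using assms unfolding fuzzy_ideal_L_def by auto

lemma fuzzy_ideal_L_zero: "fuzzy_ideal_L tri \<mu> \<Longrightarrow> \<mu> (L_zero tri) = 1"
  unfolding fuzzy_ideal_L_def by auto

lemma fuzzy_ideal_S_sum_mset:
  assumes \<sigma>: "fuzzy_ideal_S tri \<sigma>" and "c \<le> 1" and "\<And>m. m \<in># M \<Longrightarrow> c \<le> \<sigma> (h m)"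
  shows "c \<le> \<sigma> (\<Sum>\<^sub># (image_mset h M))"
  using assms(3)
proof (induction M)
  case empty
  then show ?case using \<open>c \<le> 1\<close> by (simp add: fuzzy_ideal_S_zero[OF \<sigma>])
next
  case (add m M)
  then have "c \<le> \<sigma> (h m)" "c \<le> \<sigma> (\<Sum>\<^sub># (image_mset h M))" by auto
  then show ?case
    using fuzzy_ideal_S_add[OF \<sigma>, of "h m" "\<Sum>\<^sub># (image_mset h M)"] by simp
qed

lemma fuzzy_ideal_S_sum_mset_witness:
  assumes \<sigma>: "fuzzy_ideal_S tri \<sigma>" and "M \<noteq> {#}"
  obtains m where "m \<in># M" and "\<sigma> (h m) \<le> \<sigma> (\<Sum>\<^sub># (image_mset h M))"
  using assms(2)
proof (induction M arbitrary: thesis)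
  case empty
  then show ?case by simp
next
  case (add m M)
  have sum: "min (\<sigma> (h m)) (\<sigma> (\<Sum>\<^sub># (image_mset h M))) \<le> \<sigma> (\<Sum>\<^sub># (image_mset h (add_mset m M)))"
    using fuzzy_ideal_S_add[OF \<sigma>] by simp
  show ?case
  proof (cases "M = {#} \<or> \<sigma> (h m) \<le> \<sigma> (\<Sum>\<^sub># (image_mset h M))")
    case True
    then show ?thesis using sum add.prems(1)[of m] by (auto simp: min_def split: if_splits)
  next
    case False
    then obtain m' where "m' \<in># M" "\<sigma> (h m') \<le> \<sigma> (\<Sum>\<^sub># (image_mset h M))"
      using add.IH by blast
    then show ?thesis using False sum add.prems(1)[of m'] by (simp add: min_def)
  qed
qed

lemma fuzzy_ideal_S_gev_right: "fuzzy_ideal_S tri \<sigma> \<Longrightarrow> \<sigma> a \<le> \<sigma> (gev tri T a)"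
  unfolding gev_def
  by (rule fuzzy_ideal_S_sum_mset) (auto simp: fuzzy_ideal_S_le_one fuzzy_ideal_S_tri_right)

lemma fuzzy_ideal_L_cls_ge:
  assumes \<mu>: "fuzzy_ideal_L tri \<mu>" and "M \<noteq> {#}" and "\<And>m. m \<in># M \<Longrightarrow> c \<le> \<mu> (cls tri {#m#})"
  shows "c \<le> \<mu> (cls tri M)"
  using assms(2,3)
proof (induction M)
  case empty
  then show ?case by simp
next
  case (add m M)
  show ?case
  proof (cases "M = {#}")
    case True
    then show ?thesis using add.prems by simp
  next
    case False
    have "c \<le> min (\<mu> (cls tri {#m#})) (\<mu> (cls tri M))" using add False by simp
    also have "\<dots> \<le> \<mu> (L_add tri (cls tri {#m#}) (cls tri M))"
      using False by (simp add: fuzzy_ideal_L_add[OF \<mu>] cls_in_Lset)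
    finally show ?thesis using False by (simp add: L_add_cls)
  qed
qed

lemma plusS_lower: "(\<And>x. 0 \<le> \<sigma> x) \<Longrightarrow> plusS tri \<sigma> P \<le> \<sigma> (gev tri (rep P) s)"
  unfolding plusS_def by (rule cINF_lower) (auto intro!: bdd_belowI2)

lemma plusS_greatest: "(\<And>s. c \<le> \<sigma> (gev tri (rep P) s)) \<Longrightarrow> c \<le> plusS tri \<sigma> P"
  unfolding plusS_def by (rule cINF_greatest) auto

lemma plusL_lower: "(\<And>P. P \<in> Lset tri \<Longrightarrow> 0 \<le> \<mu> P) \<Longrightarrow> plusL tri \<mu> x \<le> \<mu> (cls tri {#(x, \<gamma>)#})"
  unfolding plusL_def by (rule cINF_lower) (auto intro!: bdd_belowI2 singleton_in_Lset)

lemma plusL_greatest: "(\<And>\<gamma>. c \<le> \<mu> (cls tri {#(x, \<gamma>)#})) \<Longrightarrow> c \<le> plusL tri \<mu> x"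
  unfolding plusL_def by (rule cINF_greatest) auto

lemma fuzzy_ideal_L_plusS:
  assumes \<sigma>: "fuzzy_ideal_S tri \<sigma>"
  shows "fuzzy_ideal_L tri (plusS tri \<sigma>)"
proof -
  note lower = plusS_lower[of \<sigma>, OF fuzzy_ideal_S_nonneg[OF \<sigma>]]
  have nonneg: "0 \<le> plusS tri \<sigma> P" for P
    by (rule plusS_greatest) (rule fuzzy_ideal_S_nonneg[OF \<sigma>])
  have le_one: "plusS tri \<sigma> P \<le> 1" for P
    using lower[of P 0] by (simp add: fuzzy_ideal_S_zero[OF \<sigma>])
  have zero: "plusS tri \<sigma> (L_zero tri) = 1"
    using le_one plusS_greatest[of 1 \<sigma> "L_zero tri"]
    by (simp add: gev_L_zero fuzzy_ideal_S_zero[OF \<sigma>] antisym)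
  have add: "min (plusS tri \<sigma> P) (plusS tri \<sigma> Q) \<le> plusS tri \<sigma> (L_add tri P Q)"
    if "P \<in> Lset tri" "Q \<in> Lset tri" for P Q
  proof (rule plusS_greatest)
    fix s
    have "min (plusS tri \<sigma> P) (plusS tri \<sigma> Q) \<le> min (\<sigma> (gev tri (rep P) s)) (\<sigma> (gev tri (rep Q) s))"
      using lower by (meson min.mono)
    also have "\<dots> \<le> \<sigma> (gev tri (rep (L_add tri P Q)) s)"
      by (simp add: gev_L_add[OF that] fuzzy_ideal_S_add[OF \<sigma>])
    finally show "min (plusS tri \<sigma> P) (plusS tri \<sigma> Q) \<le> \<sigma> (gev tri (rep (L_add tri P Q)) s)" .
  qed
  have mult: "plusS tri \<sigma> Q \<le> plusS tri \<sigma> (L_mult tri P Q) \<and> plusS tri \<sigma> P \<le> plusS tri \<sigma> (L_mult tri P Q)"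
    if "P \<in> Lset tri" "Q \<in> Lset tri" for P Q
  proof (intro conjI plusS_greatest)
    fix s
    show "plusS tri \<sigma> Q \<le> \<sigma> (gev tri (rep (L_mult tri P Q)) s)"
      unfolding gev_L_mult[OF that] by (rule order_trans[OF lower fuzzy_ideal_S_gev_right[OF \<sigma>]])
    show "plusS tri \<sigma> P \<le> \<sigma> (gev tri (rep (L_mult tri P Q)) s)"
      unfolding gev_L_mult[OF that] by (rule lower)
  qed
  show ?thesis
    unfolding fuzzy_ideal_L_def using nonneg le_one zero add mult L_zero_in_Lset by force
qed

lemma plusL_plusS:
  assumes \<sigma>: "fuzzy_ideal_S tri \<sigma>" and "has_right_unity tri"
  shows "plusL tri (plusS tri \<sigma>) = \<sigma>"
proof
  fix x
  have ge: "\<sigma> x \<le> plusL tri (plusS tri \<sigma>) x"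
    by (intro plusL_greatest plusS_greatest) (simp add: gev_singleton fuzzy_ideal_S_tri_left[OF \<sigma>])
  obtain R where R: "\<And>a. \<Sum>\<^sub># (image_mset (\<lambda>(\<gamma>, f). tri a \<gamma> f) R) = a"
    using assms(2) unfolding has_right_unity_def by blast
  have le: "plusL tri (plusS tri \<sigma>) x \<le> \<sigma> x"
  proof (cases "R = {#}")
    case True
    then have "x = 0" using R[of x] by simp
    have "plusL tri (plusS tri \<sigma>) 0 \<le> plusS tri \<sigma> (cls tri {#(0, 0)#})"
      by (rule plusL_lower) (rule fuzzy_ideal_L_nonneg[OF fuzzy_ideal_L_plusS[OF \<sigma>]])
    also have "\<dots> \<le> 1"
      by (rule fuzzy_ideal_L_le_one[OF fuzzy_ideal_L_plusS[OF \<sigma>] singleton_in_Lset])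
    finally show ?thesis using \<open>x = 0\<close> by (simp add: fuzzy_ideal_S_zero[OF \<sigma>])
  next
    case False
    \<comment> \<open>\<open>x = \<Sum> x \<gamma>\<^sub>j f\<^sub>j\<close>, so some summand satisfies \<open>\<sigma> (x \<gamma>\<^sub>j f\<^sub>j) \<le> \<sigma> x\<close>\<close>
    then obtain \<gamma> f where "(\<gamma>, f) \<in># R" "\<sigma> (tri x \<gamma> f) \<le> \<sigma> x"
      using fuzzy_ideal_S_sum_mset_witness[OF \<sigma>, of R "\<lambda>(\<gamma>, f). tri x \<gamma> f"] R by auto
    then show ?thesis
      using plusL_lower[of "plusS tri \<sigma>", OF fuzzy_ideal_L_nonneg[OF fuzzy_ideal_L_plusS[OF \<sigma>]], of x \<gamma>]
        plusS_lower[of \<sigma>, OF fuzzy_ideal_S_nonneg[OF \<sigma>], of "cls tri {#(x, \<gamma>)#}" f]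
      by (simp add: gev_singleton)
  qed
  from ge le show "plusL tri (plusS tri \<sigma>) x = \<sigma> x" by simp
qed

lemma fuzzy_ideal_S_plusL:
  assumes \<mu>: "fuzzy_ideal_L tri \<mu>"
  shows "fuzzy_ideal_S tri (plusL tri \<mu>)"
proof -
  note lower = plusL_lower[of \<mu>, OF fuzzy_ideal_L_nonneg[OF \<mu>]]
  have nonneg: "0 \<le> plusL tri \<mu> x" for x
    by (rule plusL_greatest) (simp add: fuzzy_ideal_L_nonneg[OF \<mu>] singleton_in_Lset)
  have le_one: "plusL tri \<mu> x \<le> 1" for x
    using lower[of x 0] fuzzy_ideal_L_le_one[OF \<mu> singleton_in_Lset] by (meson order_trans)
  have zero: "plusL tri \<mu> 0 = 1"
    unfolding plusL_def L_zero_eq_singleton by (simp add: fuzzy_ideal_L_zero[OF \<mu>])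
  have add: "min (plusL tri \<mu> x) (plusL tri \<mu> y) \<le> plusL tri \<mu> (x + y)" for x y
  proof (rule plusL_greatest)
    fix \<gamma>
    have "min (plusL tri \<mu> x) (plusL tri \<mu> y) \<le> min (\<mu> (cls tri {#(x, \<gamma>)#})) (\<mu> (cls tri {#(y, \<gamma>)#}))"
      using lower by (meson min.mono)
    also have "\<dots> \<le> \<mu> (cls tri {#(x + y, \<gamma>)#})"
      unfolding singleton_add by (rule fuzzy_ideal_L_add[OF \<mu> singleton_in_Lset singleton_in_Lset])
    finally show "min (plusL tri \<mu> x) (plusL tri \<mu> y) \<le> \<mu> (cls tri {#(x + y, \<gamma>)#})" .
  qed
  have mult: "plusL tri \<mu> y \<le> plusL tri \<mu> (tri x \<gamma> y) \<and> plusL tri \<mu> x \<le> plusL tri \<mu> (tri x \<gamma> y)"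
    for x \<gamma> y
  proof (intro conjI plusL_greatest)
    fix \<beta>
    show "plusL tri \<mu> y \<le> \<mu> (cls tri {#(tri x \<gamma> y, \<beta>)#})"
      unfolding singleton_mult
      by (rule order_trans[OF lower fuzzy_ideal_L_mult_right[OF \<mu> singleton_in_Lset singleton_in_Lset]])
    show "plusL tri \<mu> x \<le> \<mu> (cls tri {#(tri x \<gamma> y, \<beta>)#})"
      unfolding singleton_mult
      by (rule order_trans[OF lower fuzzy_ideal_L_mult_left[OF \<mu> singleton_in_Lset singleton_in_Lset]])
  qed
  show ?thesis
    unfolding fuzzy_ideal_S_def using nonneg le_one zero add mult by (intro conjI allI exI[of _ 0]) auto
qed

lemma plusS_plusL:
  assumes \<mu>: "fuzzy_ideal_L tri \<mu>" and "has_left_unity tri" and P: "P \<in> Lset tri"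
  shows "plusS tri (plusL tri \<mu>) P = \<mu> P"
proof (rule antisym)
  show "\<mu> P \<le> plusS tri (plusL tri \<mu>) P"
  proof (intro plusS_greatest plusL_greatest)
    fix s \<gamma>
    have "cls tri {#(gev tri (rep P) s, \<gamma>)#} = L_mult tri P (cls tri {#(s, \<gamma>)#})"
      by (rule Lset_eqI) (simp_all add: P singleton_in_Lset L_mult_in_Lset gev_L_mult gev_singleton tri_gev_left)
    then show "\<mu> P \<le> \<mu> (cls tri {#(gev tri (rep P) s, \<gamma>)#})"
      using fuzzy_ideal_L_mult_left[OF \<mu> P singleton_in_Lset] by simp
  qed
  obtain E where E: "E \<noteq> {#}" and PE: "P = cls tri (image_mset (\<lambda>(e, \<delta>). (gev tri (rep P) e, \<delta>)) E)"
    using left_unity_expansion[OF assms(2) P] .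
  have "plusS tri (plusL tri \<mu>) P \<le> \<mu> (cls tri (image_mset (\<lambda>(e, \<delta>). (gev tri (rep P) e, \<delta>)) E))"
  proof (rule fuzzy_ideal_L_cls_ge[OF \<mu>])
    fix m assume "m \<in># image_mset (\<lambda>(e, \<delta>). (gev tri (rep P) e, \<delta>)) E"
    then obtain e \<delta> where m: "m = (gev tri (rep P) e, \<delta>)" by auto
    show "plusS tri (plusL tri \<mu>) P \<le> \<mu> (cls tri {#m#})"
      unfolding m
      by (rule order_trans[OF plusS_lower plusL_lower])
        (simp_all add: fuzzy_ideal_S_nonneg[OF fuzzy_ideal_S_plusL[OF \<mu>]] fuzzy_ideal_L_nonneg[OF \<mu>])
  qed (simp add: E)
  then show "plusS tri (plusL tri \<mu>) P \<le> \<mu> P"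
    using PE by simp
qed

lemma plusS_mono:
  "(\<And>x. 0 \<le> \<sigma>1 x) \<Longrightarrow> (\<And>x. \<sigma>1 x \<le> \<sigma>2 x) \<Longrightarrow> plusS tri \<sigma>1 P \<le> plusS tri \<sigma>2 P"
  by (rule plusS_greatest) (rule order_trans[OF plusS_lower])

lemma plusS_min:
  assumes "\<And>x. 0 \<le> \<sigma>1 x" and "\<And>x. 0 \<le> \<sigma>2 x"
  shows "plusS tri (\<lambda>x. min (\<sigma>1 x) (\<sigma>2 x)) P = min (plusS tri \<sigma>1 P) (plusS tri \<sigma>2 P)"
proof (rule antisym)
  show "plusS tri (\<lambda>x. min (\<sigma>1 x) (\<sigma>2 x)) P \<le> min (plusS tri \<sigma>1 P) (plusS tri \<sigma>2 P)"
    using assms by (simp add: plusS_mono)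
  show "min (plusS tri \<sigma>1 P) (plusS tri \<sigma>2 P) \<le> plusS tri (\<lambda>x. min (\<sigma>1 x) (\<sigma>2 x)) P"
    by (rule plusS_greatest) (simp add: assms plusS_lower min.coboundedI1 min.coboundedI2)
qed

lemma plusS_const [simp]: "plusS tri (\<lambda>_. k) P = k"
  by (simp add: plusS_def)

lemma plusL_const [simp]: "plusL tri (\<lambda>_. k) x = k"
  by (simp add: plusL_def)

lemma plusL_mono:
  "(\<And>P. P \<in> Lset tri \<Longrightarrow> 0 \<le> \<mu>1 P) \<Longrightarrow> (\<And>P. P \<in> Lset tri \<Longrightarrow> \<mu>1 P \<le> \<mu>2 P)
    \<Longrightarrow> plusL tri \<mu>1 x \<le> plusL tri \<mu>2 x"
  by (rule plusL_greatest) (meson order_trans plusL_lower singleton_in_Lset)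

lemma plusL_cong: "(\<And>P. P \<in> Lset tri \<Longrightarrow> \<mu>1 P = \<mu>2 P) \<Longrightarrow> plusL tri \<mu>1 = plusL tri \<mu>2"
  by (simp add: plusL_def singleton_in_Lset fun_eq_iff)

lemma plusS_inj:
  assumes "fuzzy_ideal_S tri \<sigma>1" and "fuzzy_ideal_S tri \<sigma>2" and "has_right_unity tri"
    and "\<And>P. P \<in> Lset tri \<Longrightarrow> plusS tri \<sigma>1 P = plusS tri \<sigma>2 P"
  shows "\<sigma>1 = \<sigma>2"
  using plusL_cong[of "plusS tri \<sigma>1" "plusS tri \<sigma>2"] assms by (simp add: plusL_plusS)

lemma plusS_nonconstant:
  assumes \<sigma>: "fuzzy_ideal_S tri \<sigma>" and "has_right_unity tri" and "\<sigma> x \<noteq> \<sigma> y"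
  shows "\<exists>P \<in> Lset tri. \<exists>Q \<in> Lset tri. plusS tri \<sigma> P \<noteq> plusS tri \<sigma> Q"
proof (rule ccontr)
  assume "\<not> ?thesis"
  then have "\<And>P. P \<in> Lset tri \<Longrightarrow> plusS tri \<sigma> P = (\<lambda>_. plusS tri \<sigma> (L_zero tri)) P"
    using L_zero_in_Lset by blast
  then have "\<sigma> = plusL tri (\<lambda>_. plusS tri \<sigma> (L_zero tri))"
    using plusL_cong plusL_plusS[OF \<sigma> assms(2)] by metis
  with assms(3) show False by (metis plusL_const)
qed

lemma plusL_nonconstant:
  assumes \<mu>: "fuzzy_ideal_L tri \<mu>" and "has_left_unity tri"
    and "P \<in> Lset tri" and "Q \<in> Lset tri" and "\<mu> P \<noteq> \<mu> Q"
  shows "\<exists>x y. plusL tri \<mu> x \<noteq> plusL tri \<mu> y"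
proof (rule ccontr)
  assume "\<not> ?thesis"
  then have "plusL tri \<mu> = (\<lambda>_. plusL tri \<mu> 0)" by auto
  then have "\<mu> R = plusL tri \<mu> 0" if "R \<in> Lset tri" for R
    using plusS_plusL[OF \<mu> assms(2) that] by (metis plusS_const)
  with assms(3-5) show False by simp
qed

section \<open>Transport of sums\<close>

lemma oplusL_upper:
  assumes "fuzzy_ideal_L tri \<mu>1" and "U \<in> Lset tri" and "V \<in> Lset tri" and "P = L_add tri U V"
  shows "min (\<mu>1 U) (\<mu>2 V) \<le> oplusL tri \<mu>1 \<mu>2 P"
  unfolding oplusL_def
proof (rule cSUP_upper2[where x = "(U, V)"])
  show "bdd_above ((\<lambda>(U, V). min (\<mu>1 U) (\<mu>2 V)) ` {(U, V). U \<in> Lset tri \<and> V \<in> Lset tri \<and> P = L_add tri U V})"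
    by (rule bdd_aboveI2[where M = 1]) (auto simp: fuzzy_ideal_L_le_one[OF assms(1)] min.coboundedI1)
qed (use assms(2-4) in auto)

lemma oplusL_least:
  assumes "P \<in> Lset tri"
    and "\<And>U V. U \<in> Lset tri \<Longrightarrow> V \<in> Lset tri \<Longrightarrow> P = L_add tri U V \<Longrightarrow> min (\<mu>1 U) (\<mu>2 V) \<le> c"
  shows "oplusL tri \<mu>1 \<mu>2 P \<le> c"
  unfolding oplusL_def
proof (rule cSUP_least)
  show "{(U, V). U \<in> Lset tri \<and> V \<in> Lset tri \<and> P = L_add tri U V} \<noteq> {}"
    using assms(1) L_zero_in_Lset L_add_zero_right[OF assms(1)] by auto
qed (use assms(2) in auto)

lemma plusS_cls_ge:
  assumes \<sigma>: "fuzzy_ideal_S tri \<sigma>" and "M \<noteq> {#}" and "\<And>x \<alpha>. (x, \<alpha>) \<in># M \<Longrightarrow> c \<le> \<sigma> x"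
  shows "c \<le> plusS tri \<sigma> (cls tri M)"
proof (rule plusS_greatest)
  fix s
  obtain x \<alpha> where "(x, \<alpha>) \<in># M" using \<open>M \<noteq> {#}\<close> by (metis multiset_nonemptyE surj_pair)
  then have "c \<le> 1" using assms(3) fuzzy_ideal_S_le_one[OF \<sigma>] by (meson order_trans)
  then show "c \<le> \<sigma> (gev tri (rep (cls tri M)) s)"
    unfolding rep_cls(2)[OF \<open>M \<noteq> {#}\<close>] gev_def
    by (rule fuzzy_ideal_S_sum_mset[OF \<sigma>])
      (use assms(3) fuzzy_ideal_S_tri_left[OF \<sigma>] in \<open>force intro: order_trans\<close>)
qed

lemma oplusL_plusS_le_plusS_oplusS:
  assumes \<sigma>1: "fuzzy_ideal_S tri \<sigma>1" and \<sigma>2: "fuzzy_ideal_S tri \<sigma>2" and P: "P \<in> Lset tri"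
  shows "oplusL tri (plusS tri \<sigma>1) (plusS tri \<sigma>2) P \<le> plusS tri (oplusS \<sigma>1 \<sigma>2) P"
proof (rule oplusL_least[OF P], rule plusS_greatest)
  fix U V s assume UV: "U \<in> Lset tri" "V \<in> Lset tri" "P = L_add tri U V"
  have "min (plusS tri \<sigma>1 U) (plusS tri \<sigma>2 V) \<le> min (\<sigma>1 (gev tri (rep U) s)) (\<sigma>2 (gev tri (rep V) s))"
    using plusS_lower fuzzy_ideal_S_nonneg \<sigma>1 \<sigma>2 by (meson min.mono)
  also have "\<dots> \<le> oplusS \<sigma>1 \<sigma>2 (gev tri (rep P) s)"
    by (rule oplusS_upper) (simp_all add: fuzzy_ideal_S_le_one[OF \<sigma>1] UV gev_L_add)
  finally show "min (plusS tri \<sigma>1 U) (plusS tri \<sigma>2 V) \<le> oplusS \<sigma>1 \<sigma>2 (gev tri (rep P) s)" .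
qed

lemma plusS_oplusS_le_oplusL_plusS:
  assumes \<sigma>1: "fuzzy_ideal_S tri \<sigma>1" and \<sigma>2: "fuzzy_ideal_S tri \<sigma>2"
    and "has_left_unity tri" and P: "P \<in> Lset tri"
  shows "plusS tri (oplusS \<sigma>1 \<sigma>2) P \<le> oplusL tri (plusS tri \<sigma>1) (plusS tri \<sigma>2) P"
proof (rule dense_le)
  fix c assume c: "c < plusS tri (oplusS \<sigma>1 \<sigma>2) P"
  have oplusS_nonneg': "0 \<le> oplusS \<sigma>1 \<sigma>2 x" for x
    by (rule oplusS_nonneg) (simp_all add: fuzzy_ideal_S_nonneg fuzzy_ideal_S_le_one \<sigma>1 \<sigma>2)
  have "c < oplusS \<sigma>1 \<sigma>2 (gev tri (rep P) e)" for e
    using c plusS_lower[of "oplusS \<sigma>1 \<sigma>2" P e, OF oplusS_nonneg'] by linarith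
  then have "\<exists>u v. gev tri (rep P) e = u + v \<and> c < \<sigma>1 u \<and> c < \<sigma>2 v" for e
    using oplusS_less_witness[of \<sigma>1 c \<sigma>2] fuzzy_ideal_S_le_one[OF \<sigma>1] by blast
  \<comment> \<open>split every coefficient \<open>P e\<^sub>i\<close> of the expansion of \<open>P\<close> along a left unity\<close>
  then obtain u v where split: "\<And>e. gev tri (rep P) e = u e + v e"
    and uv: "\<And>e. c < \<sigma>1 (u e)" "\<And>e. c < \<sigma>2 (v e)"
    by metis
  obtain E where E: "E \<noteq> {#}" and PE: "P = cls tri (image_mset (\<lambda>(e, \<delta>). (gev tri (rep P) e, \<delta>)) E)"
    using left_unity_expansion[OF assms(3) P] .
  define U where "U = cls tri (image_mset (\<lambda>(e, \<delta>). (u e, \<delta>)) E)"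
  define V where "V = cls tri (image_mset (\<lambda>(e, \<delta>). (v e, \<delta>)) E)"
  have UV: "U \<in> Lset tri" "V \<in> Lset tri"
    using E by (simp_all add: U_def V_def cls_in_Lset)
  have "P = cls tri (image_mset (\<lambda>(e, \<delta>). (u e + v e, \<delta>)) E)"
    by (rule PE[unfolded split])
  also have "\<dots> = L_add tri U V"
    unfolding U_def V_def using E by (subst L_add_cls) (simp_all, rule cls_eqI, simp_all add: gev_image_add)
  finally have "P = L_add tri U V" .
  moreover have "c \<le> plusS tri \<sigma>1 U" "c \<le> plusS tri \<sigma>2 V"
    unfolding U_def V_def using E uv
    by (auto intro!: plusS_cls_ge \<sigma>1 \<sigma>2 simp: less_imp_le)
  ultimately show "c \<le> oplusL tri (plusS tri \<sigma>1) (plusS tri \<sigma>2) P"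
    using oplusL_upper[OF fuzzy_ideal_L_plusS[OF \<sigma>1] UV] by (meson min.boundedI order_trans)
qed

lemma plusS_oplusS:
  assumes "fuzzy_ideal_S tri \<sigma>1" and "fuzzy_ideal_S tri \<sigma>2" and "has_left_unity tri" and "P \<in> Lset tri"
  shows "plusS tri (oplusS \<sigma>1 \<sigma>2) P = oplusL tri (plusS tri \<sigma>1) (plusS tri \<sigma>2) P"
  using assms by (simp add: antisym oplusL_plusS_le_plusS_oplusS plusS_oplusS_le_oplusL_plusS)

end

theorem proposition3p3:
  fixes tri :: "'s::comm_monoid_add \<Rightarrow> 'g::comm_monoid_add \<Rightarrow> 's \<Rightarrow> 's"
    and \<sigma> \<sigma>1 \<sigma>2 :: "'s \<Rightarrow> real"
    and \<mu> \<mu>1 \<mu>2 :: "('s, 'g) lop \<Rightarrow> real"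
  assumes "gamma_semiring_zero tri"
    and "has_left_unity tri" and "has_right_unity tri"
    and "fuzzy_ideal_S tri \<sigma>" and "fuzzy_ideal_S tri \<sigma>1" and "fuzzy_ideal_S tri \<sigma>2"
    and "fuzzy_ideal_L tri \<mu>" and "fuzzy_ideal_L tri \<mu>1" and "fuzzy_ideal_L tri \<mu>2"
  shows
    "(fuzzy_ideal_L tri (plusS tri \<sigma>) \<and>
       ((\<exists>x y. \<sigma> x \<noteq> \<sigma> y) \<longrightarrow>
          (\<exists>P \<in> Lset tri. \<exists>Q \<in> Lset tri. plusS tri \<sigma> P \<noteq> plusS tri \<sigma> Q)))
   \<and> plusL tri (plusS tri \<sigma>) = \<sigma>
   \<and> (\<sigma>1 \<noteq> \<sigma>2 \<longrightarrow> (\<exists>P \<in> Lset tri. plusS tri \<sigma>1 P \<noteq> plusS tri \<sigma>2 P))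
   \<and> (\<forall>P \<in> Lset tri. plusS tri (oplusS \<sigma>1 \<sigma>2) P
                       = oplusL tri (plusS tri \<sigma>1) (plusS tri \<sigma>2) P)
   \<and> (\<forall>P \<in> Lset tri. plusS tri (\<lambda>x. min (\<sigma>1 x) (\<sigma>2 x)) P
                       = min (plusS tri \<sigma>1 P) (plusS tri \<sigma>2 P))
   \<and> ((\<forall>x. \<sigma>1 x \<le> \<sigma>2 x) \<longrightarrow> (\<forall>P \<in> Lset tri. plusS tri \<sigma>1 P \<le> plusS tri \<sigma>2 P))
   \<and> (fuzzy_ideal_S tri (plusL tri \<mu>) \<and>
       ((\<exists>P \<in> Lset tri. \<exists>Q \<in> Lset tri. \<mu> P \<noteq> \<mu> Q) \<longrightarrow>
          (\<exists>x y. plusL tri \<mu> x \<noteq> plusL tri \<mu> y)))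
   \<and> (\<forall>P \<in> Lset tri. plusS tri (plusL tri \<mu>) P = \<mu> P)
   \<and> ((\<forall>P \<in> Lset tri. \<mu>1 P \<le> \<mu>2 P) \<longrightarrow> (\<forall>x. plusL tri \<mu>1 x \<le> plusL tri \<mu>2 x))"
proof -
  interpret gamma_semiring tri by (rule gamma_semiring.intro) (fact assms(1))
  note lu = assms(2) and ru = assms(3) and \<sigma> = assms(4-6) and \<mu> = assms(7-9)
  have nonconstant_L: "\<exists>P \<in> Lset tri. \<exists>Q \<in> Lset tri. plusS tri \<sigma> P \<noteq> plusS tri \<sigma> Q"
    if "\<exists>x y. \<sigma> x \<noteq> \<sigma> y"
    using that plusS_nonconstant[OF \<sigma>(1) ru] by blast
  have nonconstant_S: "\<exists>x y. plusL tri \<mu> x \<noteq> plusL tri \<mu> y"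
    if "\<exists>P \<in> Lset tri. \<exists>Q \<in> Lset tri. \<mu> P \<noteq> \<mu> Q"
    using that plusL_nonconstant[OF \<mu>(1) lu] by blast
  have injective: "\<exists>P \<in> Lset tri. plusS tri \<sigma>1 P \<noteq> plusS tri \<sigma>2 P" if "\<sigma>1 \<noteq> \<sigma>2"
    using that plusS_inj[OF \<sigma>(2,3) ru] by blast
  show ?thesis
    using fuzzy_ideal_L_plusS[OF \<sigma>(1)] nonconstant_L plusL_plusS[OF \<sigma>(1) ru] injective
      plusS_oplusS[OF \<sigma>(2,3) lu] plusS_min[of \<sigma>1 \<sigma>2, OF fuzzy_ideal_S_nonneg[OF \<sigma>(2)] fuzzy_ideal_S_nonneg[OF \<sigma>(3)]]
      plusS_mono[of \<sigma>1 \<sigma>2, OF fuzzy_ideal_S_nonneg[OF \<sigma>(2)]] fuzzy_ideal_S_plusL[OF \<mu>(1)] nonconstant_S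
      plusS_plusL[OF \<mu>(1) lu] plusL_mono[of \<mu>1 \<mu>2, OF fuzzy_ideal_L_nonneg[OF \<mu>(2)]]
    by blast
qed

end
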